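(* Let $M$ be an $\mathbf{FB}$-module and $a:\mathbf V\otimes M\to\mathbf V\otimes M$ a map of $\mathbf{FB}$-modules, and write $$a(t^j\otimes x)=t^j\otimes\omega^{S\setminus\{j\}}(x)+\sum_{i\in S\setminus\{j\}}t^i\otimes\alpha^S_{i,j}(x)\qquad(j\in S,\ x\in M(S\setminus\{j\})),$$ where $\omega^T$ is an endomorphism of $M(T)$ and $\alpha^S_{i,j}:M(S\setminus\{j\})\to M(S\setminus\{i\})$. Then $(M,a)$ is a representation of $\underline{\mathfrak{gl}}(\mathbf V)$ if and only if: (a) the operations $\alpha$ and $\omega$ commute with themselves and with each other; and (b) for every finite set $S$ and distinct $i,j,k\in S$, $\alpha^{S\setminus\{i\}}_{j,k}\circ\alpha^{S\setminus\{k\}}_{i,j}=\alpha^{S\setminus\{j\}}_{i,k}$.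
   Context: $k$ is a commutative ring; an $\mathbf{FB}$-module is a functor from finite sets and bijections to $k$-modules; $(M\otimes N)(S)=\bigoplus_{T\subseteq S}M(T)\otimes N(S\setminus T)$ (symmetric monoidal). $\mathbf V$ is $k$ on one-element sets and $0$ otherwise, with basis $t^i$ of $\mathbf V(\{i\})$, so $(\mathbf V\otimes M)(S)=\bigoplus_{j\in S}t^j\otimes M(S\setminus\{j\})$. A representation of $\underline{\mathfrak{gl}}(\mathbf V)$ is a pair $(M,a)$ with $a:\mathbf V\otimes M\to\mathbf V\otimes M$ such that $a_1a_2-a_2a_1=\tau(a_1-a_2)$ on $\mathbf V\otimes\mathbf V\otimes M$, where $\tau$ is the symmetry of the first two factors, $a_2=\mathrm{id}_{\mathbf V}\otimes a$, $a_1=\tau a_2\tau$. Operations: here $\alpha$ is regarded as the (natural in bijections) family $\alpha^S_{A,B}:M(S\setminus B)\to M(S\setminus A)$ indexed by disjoint one-element subsets $A=\{i\},B=\{j\}$, and $\omega$ as the family $\omega^S_{\emptyset,\emptyset}=\omega^S$. Two such families $\phi,\psi$ commute if for every finite set $S$ and pairwise disjoint subsets $A,B,C,D\subseteq S$ for which the maps are defined, $\psi^{S\setminus A}_{C,D}\circ\phi^{S\setminus D}_{A,B}=\phi^{S\setminus C}_{A,B}\circ\psi^{S\setminus B}_{C,D}$ as maps $M(S\setminus(B\cup D))\to M(S\setminus(A\cup C))$; a family commutes with itself if this holds with $\psi=\phi$. *)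

theory Defs
  imports Complex_Main
begin

text \<open>Labels are drawn from a type 'a (assumed infinite in the theorem); finite sets S of
labels are the objects of FB.  All k-modules M(S) are realised as submodules of one ambient
k-module 'm (scalar multiplication scale), and the action of a bijection
sigma : S -> sigma ` S is act sigma S : M(S) -> M(sigma ` S).\<close>

definition FB_module ::
  "('k::comm_ring_1 \<Rightarrow> 'm::ab_group_add \<Rightarrow> 'm) \<Rightarrow> ('a set \<Rightarrow> 'm set)
   \<Rightarrow> (('a \<Rightarrow> 'a) \<Rightarrow> 'a set \<Rightarrow> 'm \<Rightarrow> 'm) \<Rightarrow> bool" where
  "FB_module scale M act \<longleftrightarrow>
     module scale \<and>
     (\<forall>S. finite S \<longrightarrow> module.subspace scale (M S)) \<and>
     (\<forall>\<sigma> S. finite S \<longrightarrow> inj_on \<sigma> S \<longrightarrow>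
        (\<forall>x\<in>M S. act \<sigma> S x \<in> M (\<sigma> ` S)) \<and>
        (\<forall>x\<in>M S. \<forall>y\<in>M S. act \<sigma> S (x + y) = act \<sigma> S x + act \<sigma> S y) \<and>
        (\<forall>c. \<forall>x\<in>M S. act \<sigma> S (scale c x) = scale c (act \<sigma> S x))) \<and>
     (\<forall>S x. finite S \<longrightarrow> x \<in> M S \<longrightarrow> act id S x = x) \<and>
     (\<forall>\<sigma> \<tau> S x. finite S \<longrightarrow> inj_on \<sigma> S \<longrightarrow> inj_on \<tau> (\<sigma> ` S) \<longrightarrow> x \<in> M S \<longrightarrow>
        act \<tau> (\<sigma> ` S) (act \<sigma> S x) = act (\<tau> \<circ> \<sigma>) S x) \<and>
     (\<forall>\<sigma> \<sigma>' S x. finite S \<longrightarrow> (\<forall>s\<in>S. \<sigma> s = \<sigma>' s) \<longrightarrow> x \<in> M S \<longrightarrow>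
        act \<sigma> S x = act \<sigma>' S x)"

text \<open>(V (x) M)(S) = direct sum over j in S of t^j (x) M(S - {j}); an element is the
function j |-> its t^j-component (zero outside S).\<close>
definition VM :: "('a set \<Rightarrow> 'm::zero set) \<Rightarrow> 'a set \<Rightarrow> ('a \<Rightarrow> 'm) set" where
  "VM M S = {f. (\<forall>j\<in>S. f j \<in> M (S - {j})) \<and> (\<forall>j. j \<notin> S \<longrightarrow> f j = 0)}"

definition tVM :: "'a \<Rightarrow> 'm::zero \<Rightarrow> 'a \<Rightarrow> 'm" where
  "tVM j x = (\<lambda>i. if i = j then x else 0)"

text \<open>(V (x) V (x) M)(S) = direct sum over distinct i, j in S of t^i (x) t^j (x) M(S - {i,j}).\<close>
definition VVM :: "('a set \<Rightarrow> 'm::zero set) \<Rightarrow> 'a set \<Rightarrow> ('a \<Rightarrow> 'a \<Rightarrow> 'm) set" where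
  "VVM M S = {g. (\<forall>i\<in>S. \<forall>j\<in>S. i \<noteq> j \<longrightarrow> g i j \<in> M (S - {i, j})) \<and>
                 (\<forall>i j. i \<notin> S \<or> j \<notin> S \<or> i = j \<longrightarrow> g i j = 0)}"

text \<open>Action of a bijection sigma : S -> sigma ` S on (V (x) M)(S):
t^j (x) x |-> t^(sigma j) (x) M(sigma restricted to S - {j}) x.\<close>
definition act_VM ::
  "(('a \<Rightarrow> 'a) \<Rightarrow> 'a set \<Rightarrow> 'm \<Rightarrow> 'm) \<Rightarrow> ('a \<Rightarrow> 'a) \<Rightarrow> 'a set \<Rightarrow> ('a \<Rightarrow> 'm) \<Rightarrow> 'a \<Rightarrow> 'm::zero" where
  "act_VM act \<sigma> S f = (\<lambda>i. if i \<in> \<sigma> ` S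
      then act \<sigma> (S - {the_inv_into S \<sigma> i}) (f (the_inv_into S \<sigma> i)) else 0)"

definition FB_map_VM ::
  "('k::comm_ring_1 \<Rightarrow> 'm::ab_group_add \<Rightarrow> 'm) \<Rightarrow> ('a set \<Rightarrow> 'm set)
   \<Rightarrow> (('a \<Rightarrow> 'a) \<Rightarrow> 'a set \<Rightarrow> 'm \<Rightarrow> 'm) \<Rightarrow> ('a set \<Rightarrow> ('a \<Rightarrow> 'm) \<Rightarrow> ('a \<Rightarrow> 'm)) \<Rightarrow> bool" where
  "FB_map_VM scale M act a \<longleftrightarrow>
     (\<forall>S. finite S \<longrightarrow>
        (\<forall>f\<in>VM M S. a S f \<in> VM M S) \<and>
        (\<forall>f\<in>VM M S. \<forall>g\<in>VM M S. a S (\<lambda>i. f i + g i) = (\<lambda>i. a S f i + a S g i)) \<and>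
        (\<forall>c. \<forall>f\<in>VM M S. a S (\<lambda>i. scale c (f i)) = (\<lambda>i. scale c (a S f i))) \<and>
        (\<forall>\<sigma>. inj_on \<sigma> S \<longrightarrow> (\<forall>f\<in>VM M S.
            a (\<sigma> ` S) (act_VM act \<sigma> S f) = act_VM act \<sigma> S (a S f))))"

text \<open>a_2 = id_V (x) a on (V (x) V (x) M)(S), and the symmetry tau of the first two factors.\<close>
definition gl_a2 :: "('a set \<Rightarrow> ('a \<Rightarrow> 'm) \<Rightarrow> ('a \<Rightarrow> 'm)) \<Rightarrow> 'a set
    \<Rightarrow> ('a \<Rightarrow> 'a \<Rightarrow> 'm::zero) \<Rightarrow> 'a \<Rightarrow> 'a \<Rightarrow> 'm" where
  "gl_a2 a S g = (\<lambda>i. if i \<in> S then a (S - {i}) (g i) else (\<lambda>j. 0))"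

definition gl_tau :: "('a \<Rightarrow> 'a \<Rightarrow> 'm) \<Rightarrow> 'a \<Rightarrow> 'a \<Rightarrow> 'm" where
  "gl_tau g = (\<lambda>i j. g j i)"

definition gl_a1 :: "('a set \<Rightarrow> ('a \<Rightarrow> 'm) \<Rightarrow> ('a \<Rightarrow> 'm)) \<Rightarrow> 'a set
    \<Rightarrow> ('a \<Rightarrow> 'a \<Rightarrow> 'm::zero) \<Rightarrow> 'a \<Rightarrow> 'a \<Rightarrow> 'm" where
  "gl_a1 a S g = gl_tau (gl_a2 a S (gl_tau g))"

definition gl_rep :: "('a set \<Rightarrow> 'm::ab_group_add set) \<Rightarrow> ('a set \<Rightarrow> ('a \<Rightarrow> 'm) \<Rightarrow> ('a \<Rightarrow> 'm)) \<Rightarrow> bool" where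
  "gl_rep M a \<longleftrightarrow>
     (\<forall>S. finite S \<longrightarrow> (\<forall>g\<in>VVM M S.
        (\<lambda>i j. gl_a1 a S (gl_a2 a S g) i j - gl_a2 a S (gl_a1 a S g) i j)
        = gl_tau (\<lambda>i j. gl_a1 a S g i j - gl_a2 a S g i j)))"

text \<open>Operations: families phi S A B : M(S - B) -> M(S - A), defined for (A,B) in dom.\<close>
definition ops_commute ::
  "('a set \<Rightarrow> 'm set) \<Rightarrow> ('a set \<Rightarrow> 'a set \<Rightarrow> 'a set \<Rightarrow> 'm \<Rightarrow> 'm) \<Rightarrow> ('a set \<Rightarrow> 'a set \<Rightarrow> bool)
   \<Rightarrow> ('a set \<Rightarrow> 'a set \<Rightarrow> 'a set \<Rightarrow> 'm \<Rightarrow> 'm) \<Rightarrow> ('a set \<Rightarrow> 'a set \<Rightarrow> bool) \<Rightarrow> bool" where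
  "ops_commute M \<phi> dom\<phi> \<psi> dom\<psi> \<longleftrightarrow>
     (\<forall>S A B C D. finite S \<longrightarrow> A \<subseteq> S \<longrightarrow> B \<subseteq> S \<longrightarrow> C \<subseteq> S \<longrightarrow> D \<subseteq> S \<longrightarrow>
        A \<inter> B = {} \<longrightarrow> A \<inter> C = {} \<longrightarrow> A \<inter> D = {} \<longrightarrow>
        B \<inter> C = {} \<longrightarrow> B \<inter> D = {} \<longrightarrow> C \<inter> D = {} \<longrightarrow>
        dom\<phi> A B \<longrightarrow> dom\<psi> C D \<longrightarrow>
        (\<forall>x\<in>M (S - (B \<union> D)).
           \<psi> (S - A) C D (\<phi> (S - D) A B x) = \<phi> (S - C) A B (\<psi> (S - B) C D x)))"

definition alpha_op :: "('a set \<Rightarrow> 'a \<Rightarrow> 'a \<Rightarrow> 'm \<Rightarrow> 'm) \<Rightarrow> 'a set \<Rightarrow> 'a set \<Rightarrow> 'a set \<Rightarrow> 'm \<Rightarrow> 'm" where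
  "alpha_op \<alpha> = (\<lambda>S A B. \<alpha> S (the_elem A) (the_elem B))"

definition alpha_dom :: "'a set \<Rightarrow> 'a set \<Rightarrow> bool" where
  "alpha_dom A B \<longleftrightarrow> (\<exists>i j. A = {i} \<and> B = {j} \<and> i \<noteq> j)"

definition omega_op :: "('a set \<Rightarrow> 'm \<Rightarrow> 'm) \<Rightarrow> 'a set \<Rightarrow> 'a set \<Rightarrow> 'a set \<Rightarrow> 'm \<Rightarrow> 'm" where
  "omega_op \<omega> = (\<lambda>S A B. \<omega> S)"

definition omega_dom :: "'a set \<Rightarrow> 'a set \<Rightarrow> bool" where
  "omega_dom A B \<longleftrightarrow> A = {} \<and> B = {}"

end

theory Submission
  imports Defs "HOL-Library.Function_Algebras"
begin

(* Writing a_2 = id (x) a and a_1 = tau a_2 tau in components, the (i, j) entry of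
   a_1 a_2 g - a_2 a_1 g - tau (a_1 g - a_2 g) for g in (V (x) V (x) M)(S) is a sum, over labels
   outside {i, j}, of three kinds of terms applied to single entries of g: commutators of omega
   with alpha, defects of the composition law (b), and commutators of two alphas (the omega-omega
   terms cancel). Hence (a) and (b) make the defect vanish. Conversely, evaluating the defect at a
   g with a single nonzero entry isolates any one of these terms; for omega against alpha^S this
   needs a label outside S, which is where the infinitude of the labels enters. *)

lemma sum_closed:
  assumes "0 \<in> A" and "\<And>x y. x \<in> A \<Longrightarrow> y \<in> A \<Longrightarrow> x + y \<in> A"
    and "\<And>k. k \<in> K \<Longrightarrow> f k \<in> A"
  shows "(\<Sum>k\<in>K. f k) \<in> A"
  using assms(3) by (induction K rule: infinite_finite_induct) (auto intro: assms(1,2))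

lemma additive_map_zero:
  fixes h :: "'b::monoid_add \<Rightarrow> 'c::cancel_comm_monoid_add"
  assumes "0 \<in> A" and "\<And>x y. x \<in> A \<Longrightarrow> y \<in> A \<Longrightarrow> h (x + y) = h x + h y"
  shows "h 0 = 0"
  using assms(2)[OF assms(1) assms(1)] by simp

lemma additive_map_sum:
  fixes h :: "'b::comm_monoid_add \<Rightarrow> 'c::cancel_comm_monoid_add"
  assumes "0 \<in> A" and "\<And>x y. x \<in> A \<Longrightarrow> y \<in> A \<Longrightarrow> x + y \<in> A"
    and "\<And>x y. x \<in> A \<Longrightarrow> y \<in> A \<Longrightarrow> h (x + y) = h x + h y"
    and "\<And>k. k \<in> K \<Longrightarrow> f k \<in> A"
  shows "h (\<Sum>k\<in>K. f k) = (\<Sum>k\<in>K. h (f k))"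
  using assms(4)
proof (induction K rule: infinite_finite_induct)
  case (insert k K)
  then have "(\<Sum>k\<in>K. f k) \<in> A"
    by (intro sum_closed[OF assms(1,2)]) auto
  with insert show ?case
    by (simp add: assms(3))
qed (simp_all add: additive_map_zero[OF assms(1,3)])

lemma sum_fun_apply: "(\<Sum>k\<in>K. f k) x = (\<Sum>k\<in>K. f k x)"
  by (induction K rule: infinite_finite_induct) auto

lemma tVM_add: "tVM j (x + y) = tVM j x + tVM j (y :: 'm::monoid_add)"
  by (simp add: fun_eq_iff tVM_def)

lemma sum_offdiag_single_entry:
  "finite P \<Longrightarrow> (\<Sum>u\<in>P. \<Sum>v\<in>P - {u}. if u = p \<and> v = q then c else 0) =
    (if p \<in> P \<and> q \<in> P \<and> p \<noteq> q then c else 0)"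
  by (simp add: sum.delta_remove if_if_eq_conj[symmetric] sum.If_cases)

lemma sum_offdiag_swap:
  "finite P \<Longrightarrow> (\<Sum>k\<in>P. \<Sum>l\<in>P - {k}. G k l) = (\<Sum>l\<in>P. \<Sum>k\<in>P - {l}. G k l)"
  using sum.swap_restrict[of P P G "\<lambda>k l. l \<noteq> k"] by (simp add: set_diff_eq eq_commute)

definition alphas_commute :: "('a set \<Rightarrow> 'm set) \<Rightarrow> ('a set \<Rightarrow> 'a \<Rightarrow> 'a \<Rightarrow> 'm \<Rightarrow> 'm) \<Rightarrow> bool" where
  "alphas_commute M \<alpha> \<longleftrightarrow>
     (\<forall>S i j k l. finite S \<longrightarrow> i \<in> S \<longrightarrow> j \<in> S \<longrightarrow> k \<in> S \<longrightarrow> l \<in> S \<longrightarrow> distinct [i, j, k, l] \<longrightarrow>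
        (\<forall>x\<in>M (S - {j, l}). \<alpha> (S - {i}) k l (\<alpha> (S - {l}) i j x) = \<alpha> (S - {k}) i j (\<alpha> (S - {j}) k l x)))"

definition alpha_omega_commute ::
  "('a set \<Rightarrow> 'm set) \<Rightarrow> ('a set \<Rightarrow> 'a \<Rightarrow> 'a \<Rightarrow> 'm \<Rightarrow> 'm) \<Rightarrow> ('a set \<Rightarrow> 'm \<Rightarrow> 'm) \<Rightarrow> bool" where
  "alpha_omega_commute M \<alpha> \<omega> \<longleftrightarrow>
     (\<forall>S i j. finite S \<longrightarrow> i \<in> S \<longrightarrow> j \<in> S \<longrightarrow> i \<noteq> j \<longrightarrow>
        (\<forall>x\<in>M (S - {j}). \<omega> (S - {i}) (\<alpha> S i j x) = \<alpha> S i j (\<omega> (S - {j}) x)))"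

definition alpha_comp_law :: "('a set \<Rightarrow> 'm set) \<Rightarrow> ('a set \<Rightarrow> 'a \<Rightarrow> 'a \<Rightarrow> 'm \<Rightarrow> 'm) \<Rightarrow> bool" where
  "alpha_comp_law M \<alpha> \<longleftrightarrow>
     (\<forall>S i j k. finite S \<longrightarrow> i \<in> S \<longrightarrow> j \<in> S \<longrightarrow> k \<in> S \<longrightarrow>
        i \<noteq> j \<longrightarrow> i \<noteq> k \<longrightarrow> j \<noteq> k \<longrightarrow>
        (\<forall>x\<in>M (S - {j, k}). \<alpha> (S - {i}) j k (\<alpha> (S - {k}) i j x) = \<alpha> (S - {j}) i k x))"

lemma ops_commute_alpha_alpha_iff:
  "ops_commute M (alpha_op \<alpha>) alpha_dom (alpha_op \<alpha>) alpha_dom \<longleftrightarrow> alphas_commute M \<alpha>"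
proof
  assume comm: "ops_commute M (alpha_op \<alpha>) alpha_dom (alpha_op \<alpha>) alpha_dom"
  show "alphas_commute M \<alpha>"
    unfolding alphas_commute_def
  proof (intro allI impI ballI)
    fix S i j k l x
    assume "finite S" "i \<in> S" "j \<in> S" "k \<in> S" "l \<in> S" "distinct [i, j, k, l]" "x \<in> M (S - {j, l})"
    then show "\<alpha> (S - {i}) k l (\<alpha> (S - {l}) i j x) = \<alpha> (S - {k}) i j (\<alpha> (S - {j}) k l x)"
      using comm[unfolded ops_commute_def, rule_format, of S "{i}" "{j}" "{k}" "{l}" x]
      by (simp add: alpha_op_def alpha_dom_def insert_commute)
  qed
next
  assume "alphas_commute M \<alpha>"
  then show "ops_commute M (alpha_op \<alpha>) alpha_dom (alpha_op \<alpha>) alpha_dom"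
    unfolding ops_commute_def alphas_commute_def alpha_dom_def alpha_op_def
    by (clarsimp simp: insert_commute)
qed

lemma ops_commute_alpha_omega_iff:
  "ops_commute M (alpha_op \<alpha>) alpha_dom (omega_op \<omega>) omega_dom \<longleftrightarrow> alpha_omega_commute M \<alpha> \<omega>"
proof
  assume comm: "ops_commute M (alpha_op \<alpha>) alpha_dom (omega_op \<omega>) omega_dom"
  show "alpha_omega_commute M \<alpha> \<omega>"
    unfolding alpha_omega_commute_def
  proof (intro allI impI ballI)
    fix S i j x
    assume "finite S" "i \<in> S" "j \<in> S" "i \<noteq> j" "x \<in> M (S - {j})"
    then show "\<omega> (S - {i}) (\<alpha> S i j x) = \<alpha> S i j (\<omega> (S - {j}) x)"
      using comm[unfolded ops_commute_def, rule_format, of S "{i}" "{j}" "{}" "{}" x]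
      by (simp add: alpha_op_def alpha_dom_def omega_op_def omega_dom_def)
  qed
next
  assume "alpha_omega_commute M \<alpha> \<omega>"
  then show "ops_commute M (alpha_op \<alpha>) alpha_dom (omega_op \<omega>) omega_dom"
    unfolding ops_commute_def alpha_omega_commute_def alpha_dom_def alpha_op_def omega_dom_def omega_op_def
    by clarsimp
qed

lemma ops_commute_omega_omega: "ops_commute M (omega_op \<omega>) omega_dom (omega_op \<omega>) omega_dom"
  by (simp add: ops_commute_def omega_op_def omega_dom_def)

definition gl_defect ::
  "('a set \<Rightarrow> ('a \<Rightarrow> 'm) \<Rightarrow> 'a \<Rightarrow> 'm) \<Rightarrow> 'a set \<Rightarrow> ('a \<Rightarrow> 'a \<Rightarrow> 'm::ab_group_add) \<Rightarrow> 'a \<Rightarrow> 'a \<Rightarrow> 'm" where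
  "gl_defect a S g i j = gl_a1 a S (gl_a2 a S g) i j - gl_a2 a S (gl_a1 a S g) i j
     - gl_tau (\<lambda>i j. gl_a1 a S g i j - gl_a2 a S g i j) i j"

lemma gl_rep_iff_defect_eq_0:
  "gl_rep M a \<longleftrightarrow> (\<forall>S. finite S \<longrightarrow> (\<forall>g\<in>VVM M S. \<forall>i j. gl_defect a S g i j = 0))"
  unfolding gl_rep_def gl_defect_def fun_eq_iff by simp

lemma gl_a2_gl_a1:
  "gl_a2 a S (gl_a1 a S g) i j = gl_a1 a S (gl_a2 a S (gl_tau g)) j i"
  by (simp add: gl_a1_def gl_tau_def)

lemma Diff_Diff_singleton: "A - {a} - {b} = A - {a, b}"
  by auto

lemma VVM_entry_mem: "g \<in> VVM M S \<Longrightarrow> i \<in> S \<Longrightarrow> j \<in> S \<Longrightarrow> i \<noteq> j \<Longrightarrow> g i j \<in> M (S - {i, j})"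
  by (simp add: VVM_def)

lemma VVM_entry_eq_0: "g \<in> VVM M S \<Longrightarrow> \<not> (i \<in> S \<and> j \<in> S \<and> i \<noteq> j) \<Longrightarrow> g i j = 0"
  by (auto simp: VVM_def)

lemma VVM_row_mem_VM: "g \<in> VVM M S \<Longrightarrow> i \<in> S \<Longrightarrow> g i \<in> VM M (S - {i})"
  by (auto simp: VM_def VVM_def Diff_Diff_singleton)

lemma gl_tau_mem_VVM: "g \<in> VVM M S \<Longrightarrow> gl_tau g \<in> VVM M S"
  by (auto simp: VVM_def gl_tau_def) (metis insert_commute)

locale VM_endomorphism =
  fixes M :: "'a set \<Rightarrow> 'm::ab_group_add set"
    and a :: "'a set \<Rightarrow> ('a \<Rightarrow> 'm) \<Rightarrow> 'a \<Rightarrow> 'm"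
    and \<omega> :: "'a set \<Rightarrow> 'm \<Rightarrow> 'm"
    and \<alpha> :: "'a set \<Rightarrow> 'a \<Rightarrow> 'a \<Rightarrow> 'm \<Rightarrow> 'm"
  assumes infinite_labels: "infinite (UNIV :: 'a set)"
    and zero_mem: "finite S \<Longrightarrow> 0 \<in> M S"
    and add_mem: "finite S \<Longrightarrow> x \<in> M S \<Longrightarrow> y \<in> M S \<Longrightarrow> x + y \<in> M S"
    and a_mem_VM: "finite S \<Longrightarrow> f \<in> VM M S \<Longrightarrow> a S f \<in> VM M S"
    and a_add: "finite S \<Longrightarrow> f \<in> VM M S \<Longrightarrow> g \<in> VM M S \<Longrightarrow> a S (f + g) = a S f + a S g"
    and a_tVM: "finite S \<Longrightarrow> j \<in> S \<Longrightarrow> x \<in> M (S - {j}) \<Longrightarrow>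
      a S (tVM j x) = (\<lambda>i. if i = j then \<omega> (S - {j}) x else if i \<in> S then \<alpha> S i j x else 0)"

lemma VM_endomorphism_if_FB_map_VM:
  fixes M :: "'a set \<Rightarrow> 'm::ab_group_add set"
  assumes "infinite (UNIV :: 'a set)"
    and FB: "FB_module scale M act"
    and map: "FB_map_VM scale M act a"
    and "\<forall>S j x. finite S \<longrightarrow> j \<in> S \<longrightarrow> x \<in> M (S - {j}) \<longrightarrow>
           a S (tVM j x) = (\<lambda>i. if i = j then \<omega> (S - {j}) x else if i \<in> S then \<alpha> S i j x else 0)"
  shows "VM_endomorphism M a \<omega> \<alpha>"
proof
  have "module scale" and subspace: "finite S \<Longrightarrow> module.subspace scale (M S)" for S
    using FB by (simp_all add: FB_module_def)
  then show "finite S \<Longrightarrow> 0 \<in> M S" and "finite S \<Longrightarrow> x \<in> M S \<Longrightarrow> y \<in> M S \<Longrightarrow> x + y \<in> M S" for S x y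
    by (simp_all add: module.subspace_0 module.subspace_add)
  show "finite S \<Longrightarrow> f \<in> VM M S \<Longrightarrow> a S f \<in> VM M S"
    and "finite S \<Longrightarrow> f \<in> VM M S \<Longrightarrow> g \<in> VM M S \<Longrightarrow> a S (f + g) = a S f + a S g" for S f g
    using map by (simp_all add: FB_map_VM_def plus_fun_def)
qed (use assms in auto)

context VM_endomorphism
begin

lemma sum_mem: "finite S \<Longrightarrow> (\<And>k. k \<in> K \<Longrightarrow> f k \<in> M S) \<Longrightarrow> (\<Sum>k\<in>K. f k) \<in> M S"
  by (rule sum_closed) (simp_all add: zero_mem add_mem)

lemma zero_mem_VM: "finite S \<Longrightarrow> 0 \<in> VM M S"
  by (simp add: VM_def zero_mem)

lemma add_mem_VM: "finite S \<Longrightarrow> f \<in> VM M S \<Longrightarrow> g \<in> VM M S \<Longrightarrow> f + g \<in> VM M S"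
  by (simp add: VM_def add_mem)

lemma tVM_mem_VM: "finite S \<Longrightarrow> j \<in> S \<Longrightarrow> x \<in> M (S - {j}) \<Longrightarrow> tVM j x \<in> VM M S"
  by (auto simp: VM_def tVM_def zero_mem)

lemma VM_eq_sum_tVM: "finite S \<Longrightarrow> f \<in> VM M S \<Longrightarrow> f = (\<Sum>j\<in>S. tVM j (f j))"
  by (auto simp: fun_eq_iff VM_def tVM_def sum_fun_apply)

lemma a_sum:
  assumes "finite S" and "\<And>j. j \<in> K \<Longrightarrow> f j \<in> VM M S"
  shows "a S (\<Sum>j\<in>K. f j) = (\<Sum>j\<in>K. a S (f j))"
  using assms by (intro additive_map_sum[where A = "VM M S"] zero_mem_VM add_mem_VM a_add)

lemma a_apply:
  assumes S: "finite S" and f: "f \<in> VM M S"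
  shows "a S f i = (if i \<in> S then \<omega> (S - {i}) (f i) + (\<Sum>j\<in>S - {i}. \<alpha> S i j (f j)) else 0)"
proof -
  have f_mem: "j \<in> S \<Longrightarrow> f j \<in> M (S - {j})" for j
    using f by (simp add: VM_def)
  have "a S f = a S (\<Sum>j\<in>S. tVM j (f j))"
    using VM_eq_sum_tVM[OF S f] by (rule arg_cong)
  then have "a S f i = (\<Sum>j\<in>S. a S (tVM j (f j)) i)"
    by (simp add: a_sum S tVM_mem_VM f_mem sum_fun_apply)
  also have "\<dots> = (\<Sum>j\<in>S. if j = i then \<omega> (S - {i}) (f i) else if i \<in> S then \<alpha> S i j (f j) else 0)"
    by (rule sum.cong) (auto simp: a_tVM S f_mem)
  also have "\<dots> = (if i \<in> S then \<omega> (S - {i}) (f i) + (\<Sum>j\<in>S - {i}. \<alpha> S i j (f j)) else 0)"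
    by (simp add: sum.delta_remove S)
  finally show ?thesis .
qed

lemma alpha_eq_a_tVM:
  "finite S \<Longrightarrow> i \<in> S \<Longrightarrow> j \<in> S \<Longrightarrow> i \<noteq> j \<Longrightarrow> x \<in> M (S - {j}) \<Longrightarrow> \<alpha> S i j x = a S (tVM j x) i"
  by (simp add: a_tVM)

lemma alpha_mem:
  "finite S \<Longrightarrow> i \<in> S \<Longrightarrow> j \<in> S \<Longrightarrow> i \<noteq> j \<Longrightarrow> x \<in> M (S - {j}) \<Longrightarrow> \<alpha> S i j x \<in> M (S - {i})"
  using a_mem_VM[OF _ tVM_mem_VM] by (simp add: alpha_eq_a_tVM VM_def)

lemma alpha_add:
  "finite S \<Longrightarrow> i \<in> S \<Longrightarrow> j \<in> S \<Longrightarrow> i \<noteq> j \<Longrightarrow> x \<in> M (S - {j}) \<Longrightarrow> y \<in> M (S - {j}) \<Longrightarrow>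
    \<alpha> S i j (x + y) = \<alpha> S i j x + \<alpha> S i j y"
  by (simp add: alpha_eq_a_tVM add_mem tVM_add a_add tVM_mem_VM)

lemma omega_eq_a_tVM:
  "finite T \<Longrightarrow> j \<notin> T \<Longrightarrow> x \<in> M T \<Longrightarrow> \<omega> T x = a (insert j T) (tVM j x) j"
  by (simp add: a_tVM)

lemma omega_mem:
  assumes "finite T" and "x \<in> M T"
  shows "\<omega> T x \<in> M T"
proof -
  obtain j where "j \<notin> T"
    using ex_new_if_finite[OF infinite_labels \<open>finite T\<close>] by blast
  with assms show ?thesis
    using a_mem_VM[OF _ tVM_mem_VM, of "insert j T" j x] by (simp add: omega_eq_a_tVM VM_def)
qed

lemma omega_add:
  assumes "finite T" and "x \<in> M T" and "y \<in> M T"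
  shows "\<omega> T (x + y) = \<omega> T x + \<omega> T y"
proof -
  obtain j where "j \<notin> T"
    using ex_new_if_finite[OF infinite_labels \<open>finite T\<close>] by blast
  with assms show ?thesis
    by (simp add: omega_eq_a_tVM add_mem tVM_add a_add tVM_mem_VM)
qed

lemma omega_zero: "finite T \<Longrightarrow> \<omega> T 0 = 0"
  by (rule additive_map_zero[where A = "M T"]) (simp_all add: zero_mem omega_add)

lemma alpha_zero: "finite S \<Longrightarrow> i \<in> S \<Longrightarrow> j \<in> S \<Longrightarrow> i \<noteq> j \<Longrightarrow> \<alpha> S i j 0 = 0"
  by (rule additive_map_zero[where A = "M (S - {j})"]) (simp_all add: zero_mem alpha_add)

lemma omega_add_sum:
  assumes "finite T" and "x \<in> M T" and "\<And>k. k \<in> K \<Longrightarrow> y k \<in> M T"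
  shows "\<omega> T (x + (\<Sum>k\<in>K. y k)) = \<omega> T x + (\<Sum>k\<in>K. \<omega> T (y k))"
  using assms by (simp add: omega_add sum_mem additive_map_sum[where A = "M T"] zero_mem add_mem)

lemma alpha_add_sum:
  assumes "finite S" "i \<in> S" "j \<in> S" "i \<noteq> j"
    and "x \<in> M (S - {j})" and "\<And>k. k \<in> K \<Longrightarrow> y k \<in> M (S - {j})"
  shows "\<alpha> S i j (x + (\<Sum>k\<in>K. y k)) = \<alpha> S i j x + (\<Sum>k\<in>K. \<alpha> S i j (y k))"
  using assms by (simp add: alpha_add sum_mem additive_map_sum[where A = "M (S - {j})"] zero_mem add_mem)

lemma alpha_mem_Diff:
  "finite S \<Longrightarrow> p \<in> S \<Longrightarrow> j \<in> S \<Longrightarrow> k \<in> S \<Longrightarrow> distinct [p, j, k] \<Longrightarrow> x \<in> M (S - {p, k}) \<Longrightarrow>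
    \<alpha> (S - {p}) j k x \<in> M (S - {p, j})"
  using alpha_mem[of "S - {p}" j k x] by (auto simp: Diff_Diff_singleton)

lemma single_entry_mem_VVM:
  "finite S \<Longrightarrow> p \<in> S \<Longrightarrow> q \<in> S \<Longrightarrow> p \<noteq> q \<Longrightarrow> x \<in> M (S - {p, q}) \<Longrightarrow>
    (\<lambda>u v. if u = p \<and> v = q then x else 0) \<in> VVM M S"
  by (simp add: VVM_def zero_mem)

lemma gl_a2_apply:
  assumes "finite S" and "g \<in> VVM M S"
  shows "gl_a2 a S g i j =
    (if i \<in> S \<and> j \<in> S \<and> i \<noteq> j
     then \<omega> (S - {i, j}) (g i j) + (\<Sum>k\<in>S - {i, j}. \<alpha> (S - {i}) j k (g i k)) else 0)"
proof (cases "i \<in> S")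
  case True
  then have "gl_a2 a S g i j = a (S - {i}) (g i) j"
    by (simp add: gl_a2_def)
  also have "\<dots> = (if j \<in> S - {i} then \<omega> (S - {i} - {j}) (g i j)
      + (\<Sum>k\<in>S - {i} - {j}. \<alpha> (S - {i}) j k (g i k)) else 0)"
    using assms True by (intro a_apply VVM_row_mem_VM) simp_all
  finally show ?thesis
    using True by (auto simp: Diff_Diff_singleton)
qed (simp add: gl_a2_def)

lemma gl_a1_apply:
  assumes "finite S" and "g \<in> VVM M S"
  shows "gl_a1 a S g i j =
    (if i \<in> S \<and> j \<in> S \<and> i \<noteq> j
     then \<omega> (S - {i, j}) (g i j) + (\<Sum>k\<in>S - {i, j}. \<alpha> (S - {j}) i k (g k j)) else 0)"
proof -
  have "gl_a1 a S g i j = gl_a2 a S (gl_tau g) j i"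
    by (simp add: gl_a1_def gl_tau_def)
  also have "\<dots> = (if j \<in> S \<and> i \<in> S \<and> j \<noteq> i then \<omega> (S - {j, i}) (gl_tau g j i)
      + (\<Sum>k\<in>S - {j, i}. \<alpha> (S - {j}) i k (gl_tau g j k)) else 0)"
    using assms by (intro gl_a2_apply gl_tau_mem_VVM)
  finally show ?thesis
    by (auto simp: gl_tau_def insert_commute)
qed

lemma gl_a2_mem_VVM:
  assumes "finite S" and "g \<in> VVM M S"
  shows "gl_a2 a S g \<in> VVM M S"
proof -
  have "\<omega> (S - {i, j}) (g i j) + (\<Sum>k\<in>S - {i, j}. \<alpha> (S - {i}) j k (g i k)) \<in> M (S - {i, j})"
    if "i \<in> S" "j \<in> S" "i \<noteq> j" for i j
    using assms that by (intro add_mem omega_mem sum_mem alpha_mem_Diff VVM_entry_mem[OF assms(2)]) auto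
  with assms show ?thesis
    by (simp add: VVM_def gl_a2_apply)
qed

lemma gl_a1_mem_VVM: "finite S \<Longrightarrow> g \<in> VVM M S \<Longrightarrow> gl_a1 a S g \<in> VVM M S"
  by (simp add: gl_a1_def gl_tau_mem_VVM gl_a2_mem_VVM)

lemma alpha_add_sum_Diff:
  assumes "finite S" "p \<in> S" "i \<in> S" "k \<in> S" "distinct [p, i, k]"
    and "x \<in> M (S - {k, p})" and "\<And>l. l \<in> L \<Longrightarrow> y l \<in> M (S - {k, p})"
  shows "\<alpha> (S - {p}) i k (x + (\<Sum>l\<in>L. y l)) = \<alpha> (S - {p}) i k x + (\<Sum>l\<in>L. \<alpha> (S - {p}) i k (y l))"
  using assms by (intro alpha_add_sum) (auto simp: Diff_Diff_singleton insert_commute)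

lemma gl_a1_gl_a2_apply:
  assumes S: "finite S" and g: "g \<in> VVM M S" and ij: "i \<in> S" "j \<in> S" "i \<noteq> j"
  shows "gl_a1 a S (gl_a2 a S g) i j =
      \<omega> (S - {i, j}) (\<omega> (S - {i, j}) (g i j))
    + (\<Sum>k\<in>S - {i, j}. \<omega> (S - {i, j}) (\<alpha> (S - {i}) j k (g i k)))
    + (\<Sum>l\<in>S - {i, j}. \<alpha> (S - {j}) i l (\<omega> (S - {l, j}) (g l j)))
    + (\<Sum>l\<in>S - {i, j}. \<Sum>k\<in>S - {l, j}. \<alpha> (S - {j}) i l (\<alpha> (S - {l}) j k (g l k)))"
proof -
  have g_mem: "p \<in> S \<Longrightarrow> q \<in> S \<Longrightarrow> p \<noteq> q \<Longrightarrow> g p q \<in> M (S - {p, q})" for p q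
    by (rule VVM_entry_mem[OF g])
  have "gl_a1 a S (gl_a2 a S g) i j
      = \<omega> (S - {i, j}) (gl_a2 a S g i j) + (\<Sum>l\<in>S - {i, j}. \<alpha> (S - {j}) i l (gl_a2 a S g l j))"
    using S g ij by (simp add: gl_a1_apply gl_a2_mem_VVM)
  also have "\<omega> (S - {i, j}) (gl_a2 a S g i j)
      = \<omega> (S - {i, j}) (\<omega> (S - {i, j}) (g i j))
      + (\<Sum>k\<in>S - {i, j}. \<omega> (S - {i, j}) (\<alpha> (S - {i}) j k (g i k)))"
    using S g ij by (simp add: gl_a2_apply) (intro omega_add_sum omega_mem g_mem alpha_mem_Diff; auto)
  also have "\<alpha> (S - {j}) i l (gl_a2 a S g l j)
      = \<alpha> (S - {j}) i l (\<omega> (S - {l, j}) (g l j))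
      + (\<Sum>k\<in>S - {l, j}. \<alpha> (S - {j}) i l (\<alpha> (S - {l}) j k (g l k)))"
    if "l \<in> S - {i, j}" for l
    using S g ij that
    by (simp add: gl_a2_apply) (intro alpha_add_sum_Diff omega_mem g_mem alpha_mem_Diff; auto)
  then have "(\<Sum>l\<in>S - {i, j}. \<alpha> (S - {j}) i l (gl_a2 a S g l j))
      = (\<Sum>l\<in>S - {i, j}. \<alpha> (S - {j}) i l (\<omega> (S - {l, j}) (g l j)))
      + (\<Sum>l\<in>S - {i, j}. \<Sum>k\<in>S - {l, j}. \<alpha> (S - {j}) i l (\<alpha> (S - {l}) j k (g l k)))"
    by (simp add: sum.distrib)
  finally show ?thesis
    by (simp add: add.assoc)
qed

definition omega_alpha_comm :: "'a set \<Rightarrow> 'a \<Rightarrow> 'a \<Rightarrow> 'm \<Rightarrow> 'm" where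
  "omega_alpha_comm S i j x = \<omega> (S - {i}) (\<alpha> S i j x) - \<alpha> S i j (\<omega> (S - {j}) x)"

definition alpha_alpha_comm :: "'a set \<Rightarrow> 'a \<Rightarrow> 'a \<Rightarrow> 'a \<Rightarrow> 'a \<Rightarrow> 'm \<Rightarrow> 'm" where
  "alpha_alpha_comm S i j k l x = \<alpha> (S - {i}) k l (\<alpha> (S - {l}) i j x) - \<alpha> (S - {k}) i j (\<alpha> (S - {j}) k l x)"

definition alpha_comp_defect :: "'a set \<Rightarrow> 'a \<Rightarrow> 'a \<Rightarrow> 'a \<Rightarrow> 'm \<Rightarrow> 'm" where
  "alpha_comp_defect S i j k x = \<alpha> (S - {i}) j k (\<alpha> (S - {k}) i j x) - \<alpha> (S - {j}) i k x"

lemma gl_defect_expansion: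
  assumes S: "finite S" and g: "g \<in> VVM M S" and ij: "i \<in> S" "j \<in> S" "i \<noteq> j"
  shows "gl_defect a S g i j =
      (\<Sum>k\<in>S - {i, j}. omega_alpha_comm (S - {i}) j k (g i k))
    - (\<Sum>k\<in>S - {i, j}. omega_alpha_comm (S - {j}) i k (g k j))
    + (\<Sum>k\<in>S - {i, j}. alpha_comp_defect S j i k (g k i))
    - (\<Sum>k\<in>S - {i, j}. alpha_comp_defect S i j k (g j k))
    + (\<Sum>l\<in>S - {i, j}. \<Sum>k\<in>S - {i, j} - {l}. alpha_alpha_comm S j k i l (g l k))"
proof -
  define P where "P = S - {i, j}"
  have P: "finite P" "i \<notin> P" "j \<notin> P"
    using S by (auto simp: P_def)
  have "S - {l, j} = insert i (P - {l})" "S - {l, i} = insert j (P - {l})" if "l \<in> P" for l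
    using that ij by (auto simp: P_def)
  then have split: "(\<Sum>l\<in>P. \<Sum>k\<in>S - {l, j}. F l k) = (\<Sum>l\<in>P. F l i) + (\<Sum>l\<in>P. \<Sum>k\<in>P - {l}. F l k)"
    "(\<Sum>l\<in>P. \<Sum>k\<in>S - {l, i}. F l k) = (\<Sum>l\<in>P. F l j) + (\<Sum>l\<in>P. \<Sum>k\<in>P - {l}. F l k)"
    for F :: "'a \<Rightarrow> 'a \<Rightarrow> 'm"
    using P by (simp_all add: sum.distrib cong: sum.cong)
  have a1_a2: "gl_a1 a S (gl_a2 a S g) i j =
      \<omega> (S - {i, j}) (\<omega> (S - {i, j}) (g i j))
    + (\<Sum>k\<in>P. \<omega> (S - {i, j}) (\<alpha> (S - {i}) j k (g i k)))
    + (\<Sum>l\<in>P. \<alpha> (S - {j}) i l (\<omega> (S - {l, j}) (g l j)))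
    + (\<Sum>l\<in>P. \<Sum>k\<in>S - {l, j}. \<alpha> (S - {j}) i l (\<alpha> (S - {l}) j k (g l k)))"
    unfolding P_def using S g ij by (rule gl_a1_gl_a2_apply)
  have a2_a1: "gl_a2 a S (gl_a1 a S g) i j =
      \<omega> (S - {i, j}) (\<omega> (S - {i, j}) (g i j))
    + (\<Sum>k\<in>P. \<omega> (S - {i, j}) (\<alpha> (S - {j}) i k (g k j)))
    + (\<Sum>l\<in>P. \<alpha> (S - {i}) j l (\<omega> (S - {l, i}) (g i l)))
    + (\<Sum>l\<in>P. \<Sum>k\<in>S - {l, i}. \<alpha> (S - {i}) j l (\<alpha> (S - {l}) i k (g k l)))"
    using gl_a1_gl_a2_apply[OF S gl_tau_mem_VVM[OF g] ij(2,1) ij(3)[symmetric]]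
    by (simp add: gl_a2_gl_a1 gl_tau_def insert_commute P_def)
  have tau: "gl_tau (\<lambda>i j. gl_a1 a S g i j - gl_a2 a S g i j) i j
      = (\<Sum>k\<in>P. \<alpha> (S - {i}) j k (g k i)) - (\<Sum>k\<in>P. \<alpha> (S - {j}) i k (g j k))"
    using S g ij by (simp add: gl_tau_def gl_a1_apply gl_a2_apply P_def insert_commute)
  show ?thesis
    unfolding gl_defect_def a1_a2 a2_a1 tau split P_def[symmetric]
      sum_offdiag_swap[OF P(1), of "\<lambda>k l. \<alpha> (S - {i}) j k (\<alpha> (S - {k}) i l (g l k))"]
    by (simp add: omega_alpha_comm_def alpha_comp_defect_def alpha_alpha_comm_def sum_subtractf
        Diff_Diff_singleton insert_commute P_def algebra_simps)
qed

lemma gl_defect_outside: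
  assumes S: "finite S" and g: "g \<in> VVM M S" and ij: "\<not> (i \<in> S \<and> j \<in> S \<and> i \<noteq> j)"
  shows "gl_defect a S g i j = 0"
proof -
  have vanish: "h i j = 0" "h j i = 0" if "h \<in> VVM M S" for h
    using that ij VVM_entry_eq_0[of h M S i j] VVM_entry_eq_0[of h M S j i] by auto
  show ?thesis
    using vanish[OF gl_a1_mem_VVM[OF S gl_a2_mem_VVM[OF S g]]] vanish[OF gl_a2_mem_VVM[OF S gl_a1_mem_VVM[OF S g]]]
      vanish[OF gl_a1_mem_VVM[OF S g]] vanish[OF gl_a2_mem_VVM[OF S g]]
    by (simp add: gl_defect_def gl_tau_def)
qed

lemma omega_alpha_comm_vanishes:
  "alpha_omega_commute M \<alpha> \<omega> \<Longrightarrow> finite S \<Longrightarrow> i \<in> S \<Longrightarrow> j \<in> S \<Longrightarrow> i \<noteq> j \<Longrightarrow> x \<in> M (S - {j}) \<Longrightarrow>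
    omega_alpha_comm S i j x = 0"
  by (simp add: alpha_omega_commute_def omega_alpha_comm_def)

lemma alpha_comp_defect_vanishes:
  "alpha_comp_law M \<alpha> \<Longrightarrow> finite S \<Longrightarrow> i \<in> S \<Longrightarrow> j \<in> S \<Longrightarrow> k \<in> S \<Longrightarrow> distinct [i, j, k] \<Longrightarrow>
    x \<in> M (S - {j, k}) \<Longrightarrow> alpha_comp_defect S i j k x = 0"
  by (simp add: alpha_comp_law_def alpha_comp_defect_def)

lemma alpha_alpha_comm_vanishes:
  "alphas_commute M \<alpha> \<Longrightarrow> finite S \<Longrightarrow> i \<in> S \<Longrightarrow> j \<in> S \<Longrightarrow> k \<in> S \<Longrightarrow> l \<in> S \<Longrightarrow>
    distinct [i, j, k, l] \<Longrightarrow> x \<in> M (S - {j, l}) \<Longrightarrow> alpha_alpha_comm S i j k l x = 0"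
  unfolding alphas_commute_def alpha_alpha_comm_def by (simp only: right_minus_eq) blast

lemma gl_defect_eq_0:
  assumes "alphas_commute M \<alpha>" and "alpha_omega_commute M \<alpha> \<omega>" and "alpha_comp_law M \<alpha>"
    and S: "finite S" and g: "g \<in> VVM M S"
  shows "gl_defect a S g i j = 0"
proof (cases "i \<in> S \<and> j \<in> S \<and> i \<noteq> j")
  case True
  have g_mem: "p \<in> S \<Longrightarrow> q \<in> S \<Longrightarrow> p \<noteq> q \<Longrightarrow> g p q \<in> M (S - {p, q})" for p q
    by (rule VVM_entry_mem[OF g])
  have "omega_alpha_comm (S - {i}) j k (g i k) = 0" "omega_alpha_comm (S - {j}) i k (g k j) = 0"
    if "k \<in> S - {i, j}" for k
    using S True that g_mem[of i k] g_mem[of k j]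
    by (auto simp: Diff_Diff_singleton insert_commute intro!: omega_alpha_comm_vanishes[OF assms(2)])
  moreover have "alpha_comp_defect S j i k (g k i) = 0" "alpha_comp_defect S i j k (g j k) = 0"
    if "k \<in> S - {i, j}" for k
    using S True that g_mem[of k i] g_mem[of j k]
    by (auto simp: insert_commute intro!: alpha_comp_defect_vanishes[OF assms(3)])
  moreover have "alpha_alpha_comm S j k i l (g l k) = 0" if "l \<in> S - {i, j}" "k \<in> S - {i, j} - {l}" for k l
    using S True that g_mem[of l k]
    by (auto simp: insert_commute intro!: alpha_alpha_comm_vanishes[OF assms(1)])
  ultimately show ?thesis
    using S g True by (simp add: gl_defect_expansion)
qed (use S g in \<open>rule gl_defect_outside\<close>)

(* The side conditions are memberships in set differences so that the simplifier can discharge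
   them inside sums over S - {i, j}. *)
lemma omega_alpha_comm_zero: "finite S \<Longrightarrow> i \<in> S \<Longrightarrow> j \<in> S - {i} \<Longrightarrow> omega_alpha_comm S i j 0 = 0"
  by (clarsimp simp: omega_alpha_comm_def alpha_zero omega_zero)

lemma alpha_comp_defect_zero:
  "finite S \<Longrightarrow> i \<in> S \<Longrightarrow> j \<in> S - {i} \<Longrightarrow> k \<in> S - {i, j} \<Longrightarrow> alpha_comp_defect S i j k 0 = 0"
  by (clarsimp simp: alpha_comp_defect_def alpha_zero)

lemma alpha_alpha_comm_zero:
  "finite S \<Longrightarrow> i \<in> S \<Longrightarrow> k \<in> S - {i} \<Longrightarrow> l \<in> S - {i, k} \<Longrightarrow> j \<in> S - {i, k, l} \<Longrightarrow>
    alpha_alpha_comm S i j k l 0 = 0"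
  by (clarsimp simp: alpha_alpha_comm_def alpha_zero)

lemmas commutator_zero = omega_alpha_comm_zero alpha_comp_defect_zero alpha_alpha_comm_zero

lemma alpha_comp_law_if_gl_rep:
  assumes "gl_rep M a"
  shows "alpha_comp_law M \<alpha>"
  unfolding alpha_comp_law_def
proof (intro allI impI ballI)
  fix S i j k x
  assume S: "finite S" and ijk: "i \<in> S" "j \<in> S" "k \<in> S" "i \<noteq> j" "i \<noteq> k" "j \<noteq> k"
    and x: "x \<in> M (S - {j, k})"
  define g where "g = (\<lambda>u v. if u = j \<and> v = k then x else 0)"
  have g: "g \<in> VVM M S"
    using S ijk x by (simp add: g_def single_entry_mem_VVM)
  then have "gl_defect a S g i j = 0"
    using assms S by (simp add: gl_rep_iff_defect_eq_0)
  moreover have "gl_defect a S g i j = - alpha_comp_defect S i j k x"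
    using S ijk g by (simp add: gl_defect_expansion g_def commutator_zero if_distrib cong: if_cong)
  ultimately show "\<alpha> (S - {i}) j k (\<alpha> (S - {k}) i j x) = \<alpha> (S - {j}) i k x"
    by (simp add: alpha_comp_defect_def)
qed

lemma alphas_commute_if_gl_rep:
  assumes "gl_rep M a"
  shows "alphas_commute M \<alpha>"
  unfolding alphas_commute_def
proof (intro allI impI ballI)
  fix S i j k l x
  assume S: "finite S" and ijkl: "i \<in> S" "j \<in> S" "k \<in> S" "l \<in> S"
    and "distinct [i, j, k, l]" and x: "x \<in> M (S - {j, l})"
  then have ne: "i \<noteq> j" "i \<noteq> k" "i \<noteq> l" "j \<noteq> k" "j \<noteq> l" "k \<noteq> l"
    by auto
  define g where "g = (\<lambda>u v. if u = l \<and> v = j then x else 0)"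
  have g: "g \<in> VVM M S"
    unfolding g_def using S ijkl ne x by (intro single_entry_mem_VVM) (auto simp: insert_commute)
  then have "gl_defect a S g k i = 0"
    using assms S by (simp add: gl_rep_iff_defect_eq_0)
  moreover have "gl_defect a S g k i = alpha_alpha_comm S i j k l x"
    using S ijkl ne g
    by (simp add: gl_defect_expansion g_def commutator_zero if_distrib sum_offdiag_single_entry cong: if_cong)
  ultimately show "\<alpha> (S - {i}) k l (\<alpha> (S - {l}) i j x) = \<alpha> (S - {k}) i j (\<alpha> (S - {j}) k l x)"
    by (simp add: alpha_alpha_comm_def)
qed

lemma alpha_omega_commute_if_gl_rep:
  assumes "gl_rep M a"
  shows "alpha_omega_commute M \<alpha> \<omega>"
  unfolding alpha_omega_commute_def
proof (intro allI impI ballI)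
  fix S i j x
  assume S: "finite S" and ij: "i \<in> S" "j \<in> S" "i \<noteq> j" and x: "x \<in> M (S - {j})"
  obtain m where m: "m \<notin> S"
    using ex_new_if_finite[OF infinite_labels S] by blast
  with ij have m_ne: "i \<noteq> m" "j \<noteq> m"
    by auto
  define g where "g = (\<lambda>u v. if u = j \<and> v = m then x else 0)"
  have S': "finite (insert m S)" and "insert m S - {j, m} = S - {j}"
    using S m by auto
  then have g: "g \<in> VVM M (insert m S)"
    unfolding g_def using ij m x by (intro single_entry_mem_VVM) auto
  then have "gl_defect a (insert m S) g i m = 0"
    using assms S' by (simp add: gl_rep_iff_defect_eq_0)
  moreover have "gl_defect a (insert m S) g i m = - omega_alpha_comm S i j x"
    using S ij m m_ne g
    by (simp add: gl_defect_expansion g_def commutator_zero if_distrib cong: if_cong)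
  ultimately show "\<omega> (S - {i}) (\<alpha> S i j x) = \<alpha> S i j (\<omega> (S - {j}) x)"
    by (simp add: omega_alpha_comm_def)
qed

theorem gl_rep_iff:
  "gl_rep M a \<longleftrightarrow> alphas_commute M \<alpha> \<and> alpha_omega_commute M \<alpha> \<omega> \<and> alpha_comp_law M \<alpha>"
  using alphas_commute_if_gl_rep alpha_omega_commute_if_gl_rep alpha_comp_law_if_gl_rep gl_defect_eq_0
  by (auto simp: gl_rep_iff_defect_eq_0)

end

theorem proposition4p6:
  fixes scale :: "'k::comm_ring_1 \<Rightarrow> 'm::ab_group_add \<Rightarrow> 'm"
    and M :: "'a set \<Rightarrow> 'm set"
    and act :: "('a \<Rightarrow> 'a) \<Rightarrow> 'a set \<Rightarrow> 'm \<Rightarrow> 'm"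
    and a :: "'a set \<Rightarrow> ('a \<Rightarrow> 'm) \<Rightarrow> ('a \<Rightarrow> 'm)"
    and \<omega> :: "'a set \<Rightarrow> 'm \<Rightarrow> 'm"
    and \<alpha> :: "'a set \<Rightarrow> 'a \<Rightarrow> 'a \<Rightarrow> 'm \<Rightarrow> 'm"
  assumes "infinite (UNIV :: 'a set)"
    and "FB_module scale M act"
    and "FB_map_VM scale M act a"
    and "\<forall>S j x. finite S \<longrightarrow> j \<in> S \<longrightarrow> x \<in> M (S - {j}) \<longrightarrow>
           a S (tVM j x) =
             (\<lambda>i. if i = j then \<omega> (S - {j}) x else if i \<in> S then \<alpha> S i j x else 0)"
  shows "gl_rep M a \<longleftrightarrow>
           ((ops_commute M (alpha_op \<alpha>) alpha_dom (alpha_op \<alpha>) alpha_dom \<and>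
             ops_commute M (omega_op \<omega>) omega_dom (omega_op \<omega>) omega_dom \<and>
             ops_commute M (alpha_op \<alpha>) alpha_dom (omega_op \<omega>) omega_dom) \<and>
            (\<forall>S i j k. finite S \<longrightarrow> i \<in> S \<longrightarrow> j \<in> S \<longrightarrow> k \<in> S \<longrightarrow>
               i \<noteq> j \<longrightarrow> i \<noteq> k \<longrightarrow> j \<noteq> k \<longrightarrow>
               (\<forall>x\<in>M (S - {j, k}).
                  \<alpha> (S - {i}) j k (\<alpha> (S - {k}) i j x) = \<alpha> (S - {j}) i k x)))"
proof -
  interpret VM_endomorphism M a \<omega> \<alpha>
    using assms by (rule VM_endomorphism_if_FB_map_VM)
  show ?thesis
    using gl_rep_iff ops_commute_omega_omega[of M \<omega>]
    unfolding ops_commute_alpha_alpha_iff ops_commute_alpha_omega_iff alpha_comp_law_def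
    by blast
qed

end
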